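(* Let $G$ be a finite group, $H,K\le G$, and $p,q$ primes. Then for the ideals $\mathcal{P}_{L,r}$ of $\mathrm{Gh}(\underline{A}_G)$: (i) $\mathcal{P}_{K,0}\subseteq\mathcal{P}_{H,0}$ if and only if $H\preccurlyeq_GK$; (ii) $\mathcal{P}_{H,0}\subseteq\mathcal{P}_{H,p}$ and $\mathcal{P}_{H,p}\not\subseteq\mathcal{P}_{K,0}$; (iii) $\mathcal{P}_{K,p}\subseteq\mathcal{P}_{H,q}$ if and only if $p=q$ and $H\preccurlyeq_GK$.
   Context: For $H\le G$, $\widetilde{A}(H)$ is the subring of $\prod_{I\le H}\mathbb{Z}$ of tuples $(a_I)_{I\le H}$ with $a_{hIh^{-1}}=a_I$ for $h\in H$; $\mathrm{Gh}(\underline{A}_G)$ is the $G$-Tambara functor with $\mathrm{Gh}(\underline{A}_G)(G/H)=\widetilde{A}(H)$ (restriction is projection onto components, transfer $\mathrm{tr}^K_H(a)_I=\sum_{kH\in K/H,\ I^k\le H}a_{I^k}$, norm $\mathrm{nm}^K_H(a)_I=\prod_{IgH\in I\backslash K/H}a_{I^g\cap H}$, conjugation $c_{g,H}(a)_J=a_{g^{-1}Jg}$). $I\preccurlyeq_G L$ means $I$ is conjugate in $G$ to a subgroup of $L$. For $L\le G$ and $r$ a prime or $0$, $\mathcal{P}_{L,r}$ is the ideal with $\mathcal{P}_{L,r}(G/M)=\widetilde{A}(M)\cap\prod_{I\le M}\delta_{L,r}(I)\mathbb{Z}$, where $\delta_{L,r}(I)=r$ if $I\preccurlyeq_GL$ and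 $1$ otherwise. *)

theory Defs
  imports "HOL-Algebra.Algebra" "HOL-Computational_Algebra.Primes"
begin

definition conj_sub :: "('a, 'b) monoid_scheme \<Rightarrow> 'a \<Rightarrow> 'a set \<Rightarrow> 'a set" where
  "conj_sub G g I = l_coset G g (r_coset G I (inv\<^bsub>G\<^esub> g))"

definition subconj :: "('a, 'b) monoid_scheme \<Rightarrow> 'a set \<Rightarrow> 'a set \<Rightarrow> bool" where
  "subconj G I L \<longleftrightarrow> (\<exists>g \<in> carrier G. conj_sub G g I \<subseteq> L)"

text \<open>The ring tilde-A(M): tuples (a_I) indexed by the subgroups I of M, constant on
  M-conjugacy classes. Tuples are represented as functions on sets, vanishing off the
  index set (so that equal tuples are equal functions).\<close>
definition Atilde :: "('a, 'b) monoid_scheme \<Rightarrow> 'a set \<Rightarrow> ('a set \<Rightarrow> int) set" where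
  "Atilde G M = {a. (\<forall>I. \<not> (subgroup I G \<and> I \<subseteq> M) \<longrightarrow> a I = 0) \<and>
      (\<forall>I h. subgroup I G \<and> I \<subseteq> M \<and> h \<in> M \<longrightarrow> a (conj_sub G h I) = a I)}"

definition delta :: "('a, 'b) monoid_scheme \<Rightarrow> 'a set \<Rightarrow> nat \<Rightarrow> 'a set \<Rightarrow> int" where
  "delta G L r I = (if subconj G I L then int r else 1)"

text \<open>The ideal P_{L,r} of Gh(A_G), evaluated at G/M.\<close>
definition Pideal :: "('a, 'b) monoid_scheme \<Rightarrow> 'a set \<Rightarrow> nat \<Rightarrow> 'a set \<Rightarrow> ('a set \<Rightarrow> int) set" where
  "Pideal G L r M = {a \<in> Atilde G M. \<forall>I. subgroup I G \<and> I \<subseteq> M \<longrightarrow> delta G L r I dvd a I}"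

definition ideal_incl :: "('a, 'b) monoid_scheme \<Rightarrow> ('a set \<Rightarrow> ('a set \<Rightarrow> int) set)
    \<Rightarrow> ('a set \<Rightarrow> ('a set \<Rightarrow> int) set) \<Rightarrow> bool" where
  "ideal_incl G P Q \<longleftrightarrow> (\<forall>M. subgroup M G \<longrightarrow> P M \<subseteq> Q M)"

end

theory Submission
  imports Defs
begin

text \<open>Testing an inclusion P_{L,r} \<subseteq> P_{L',r'} at level G/I on the tuple supported at the
  single index I (which I-conjugation fixes), with entry \<delta>_{L,r}(I), shows that the inclusion
  holds iff \<delta>_{L',r'}(I) divides \<delta>_{L,r}(I) for every subgroup I. For s \<noteq> 1, evaluating at
  I = H and using transitivity of \<preccurlyeq>_G, this says P_{K,r} \<subseteq> P_{H,s} iff s divides r and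
  H \<preccurlyeq>_G K; all three items are instances.\<close>

lemma conj_sub_eq_image: "conj_sub G g I = (\<lambda>x. g \<otimes>\<^bsub>G\<^esub> (x \<otimes>\<^bsub>G\<^esub> inv\<^bsub>G\<^esub> g)) ` I"
  by (auto simp: conj_sub_def l_coset_def r_coset_def)

context group
begin

lemma conj_sub_subgroup_self:
  assumes "subgroup M G" "h \<in> M"
  shows "conj_sub G h M = M"
proof -
  interpret M: subgroup M G by fact
  have h: "h \<in> carrier G" "inv h \<in> M" using assms(2) by auto
  show ?thesis
  proof
    show "conj_sub G h M \<subseteq> M"
      unfolding conj_sub_eq_image using assms(2) h by auto
    show "M \<subseteq> conj_sub G h M"
    proof
      fix y assume y: "y \<in> M"
      then have "inv h \<otimes> y \<otimes> h \<in> M" using assms(2) h by simp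
      moreover have "y = h \<otimes> ((inv h \<otimes> y \<otimes> h) \<otimes> inv h)"
        using h y by (simp add: m_assoc flip: m_assoc[of h "inv h"])
      ultimately show "y \<in> conj_sub G h M" unfolding conj_sub_eq_image by blast
    qed
  qed
qed

lemma conj_sub_cancel:
  assumes "h \<in> carrier G" "I \<subseteq> carrier G" "J \<subseteq> carrier G"
    and "conj_sub G h I = conj_sub G h J"
  shows "I = J"
proof -
  have "inj_on (\<lambda>x. h \<otimes> (x \<otimes> inv h)) (carrier G)"
    using assms(1) by (intro inj_onI) simp
  then show ?thesis
    using assms by (simp add: conj_sub_eq_image inj_on_image_eq_iff)
qed

lemma subconj_refl:
  assumes "subgroup I G"
  shows "subconj G I I"
  using conj_sub_subgroup_self[OF assms subgroup.one_closed[OF assms]]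
  unfolding subconj_def by blast

lemma subconj_trans:
  assumes "I \<subseteq> carrier G" "subconj G I H" "subconj G H K"
  shows "subconj G I K"
proof -
  obtain g where g: "g \<in> carrier G" "conj_sub G g I \<subseteq> H"
    using assms(2) subconj_def by metis
  obtain h where h: "h \<in> carrier G" "conj_sub G h H \<subseteq> K"
    using assms(3) subconj_def by metis
  have "conj_sub G (h \<otimes> g) I \<subseteq> K"
  proof
    fix y assume "y \<in> conj_sub G (h \<otimes> g) I"
    then obtain x where x: "x \<in> I" "y = (h \<otimes> g) \<otimes> (x \<otimes> inv (h \<otimes> g))"
      unfolding conj_sub_eq_image by blast
    have "g \<otimes> (x \<otimes> inv g) \<in> H" using g x unfolding conj_sub_eq_image by blast
    then have "h \<otimes> ((g \<otimes> (x \<otimes> inv g)) \<otimes> inv h) \<in> K"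
      using h unfolding conj_sub_eq_image by blast
    moreover have "y = h \<otimes> ((g \<otimes> (x \<otimes> inv g)) \<otimes> inv h)"
      using x g h assms(1) by (auto simp: inv_mult_group m_assoc)
    ultimately show "y \<in> K" by simp
  qed
  then show ?thesis unfolding subconj_def using g h by blast
qed

end

definition top_tuple :: "'a set \<Rightarrow> int \<Rightarrow> 'a set \<Rightarrow> int" where
  "top_tuple M c = (\<lambda>I. if I = M then c else 0)"

lemma top_tuple_in_Atilde:
  assumes "group G" "subgroup M G"
  shows "top_tuple M c \<in> Atilde G M"
  unfolding Atilde_def top_tuple_def
proof (intro CollectI conjI allI impI)
  fix I assume "\<not> (subgroup I G \<and> I \<subseteq> M)"
  then show "(if I = M then c else 0) = 0" using assms(2) by auto
next
  fix I h assume I: "subgroup I G \<and> I \<subseteq> M \<and> h \<in> M"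
  then have "conj_sub G h I = M \<longleftrightarrow> I = M"
    using group.conj_sub_cancel[OF assms(1), of h I M] group.conj_sub_subgroup_self[OF assms]
      subgroup.subset[OF assms(2)] by auto
  then show "(if conj_sub G h I = M then c else 0) = (if I = M then c else 0)" by simp
qed

lemma top_tuple_in_Pideal_iff:
  assumes "group G" "subgroup M G"
  shows "top_tuple M c \<in> Pideal G L r M \<longleftrightarrow> delta G L r M dvd c"
  using top_tuple_in_Atilde[OF assms] assms(2) by (auto simp: Pideal_def top_tuple_def)

lemma ideal_incl_Pideal_iff_delta_dvd:
  assumes "group G"
  shows "ideal_incl G (Pideal G L r) (Pideal G L' r')
    \<longleftrightarrow> (\<forall>I. subgroup I G \<longrightarrow> delta G L' r' I dvd delta G L r I)"
proof
  assume incl: "ideal_incl G (Pideal G L r) (Pideal G L' r')"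
  show "\<forall>I. subgroup I G \<longrightarrow> delta G L' r' I dvd delta G L r I"
  proof (intro allI impI)
    fix I assume I: "subgroup I G"
    have "top_tuple I (delta G L r I) \<in> Pideal G L r I"
      by (simp add: top_tuple_in_Pideal_iff[OF assms I])
    then have "top_tuple I (delta G L r I) \<in> Pideal G L' r' I"
      using incl I unfolding ideal_incl_def by blast
    then show "delta G L' r' I dvd delta G L r I"
      by (simp add: top_tuple_in_Pideal_iff[OF assms I])
  qed
next
  assume delta_dvd: "\<forall>I. subgroup I G \<longrightarrow> delta G L' r' I dvd delta G L r I"
  have "delta G L' r' I dvd a I"
    if "subgroup I G" "delta G L r I dvd a I" for I and a :: "'a set \<Rightarrow> int"
    using dvd_trans[OF delta_dvd[rule_format, OF that(1)] that(2)] .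
  then show "ideal_incl G (Pideal G L r) (Pideal G L' r')"
    unfolding ideal_incl_def Pideal_def by blast
qed

lemma ideal_incl_Pideal_iff:
  assumes "group G" "subgroup H G" "s \<noteq> 1"
  shows "ideal_incl G (Pideal G K r) (Pideal G H s) \<longleftrightarrow> s dvd r \<and> subconj G H K"
proof -
  have "delta G H s H dvd delta G K r H \<longleftrightarrow> s dvd r \<and> subconj G H K"
    using group.subconj_refl[OF assms(1,2)] assms(3) by (simp add: delta_def)
  moreover have "delta G H s I dvd delta G K r I"
    if "s dvd r" "subconj G H K" "subgroup I G" for I
    using that group.subconj_trans[OF assms(1) subgroup.subset[OF that(3)]]
    by (simp add: delta_def)
  ultimately show ?thesis
    using ideal_incl_Pideal_iff_delta_dvd[OF assms(1)] assms(2) by blast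
qed

theorem proposition4p3:
  fixes G :: "('a, 'b) monoid_scheme" and H K :: "'a set" and p q :: nat
  assumes "group G" and "finite (carrier G)"
    and "subgroup H G" and "subgroup K G"
    and "Factorial_Ring.prime p" and "Factorial_Ring.prime q"
  shows "(ideal_incl G (Pideal G K 0) (Pideal G H 0) \<longleftrightarrow> subconj G H K)
       \<and> (ideal_incl G (Pideal G H 0) (Pideal G H p) \<and> \<not> ideal_incl G (Pideal G H p) (Pideal G K 0))
       \<and> (ideal_incl G (Pideal G K p) (Pideal G H q) \<longleftrightarrow> p = q \<and> subconj G H K)"
proof (intro conjI)
  have p: "p \<noteq> 0" "p \<noteq> 1" and q: "q \<noteq> 1" using assms(5,6) by auto
  show "ideal_incl G (Pideal G K 0) (Pideal G H 0) \<longleftrightarrow> subconj G H K"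
    using ideal_incl_Pideal_iff[OF assms(1,3), where s = 0 and r = 0] by simp
  show "ideal_incl G (Pideal G H 0) (Pideal G H p)"
    using ideal_incl_Pideal_iff[OF assms(1,3) p(2), where K = H and r = 0]
      group.subconj_refl[OF assms(1,3)] by simp
  show "\<not> ideal_incl G (Pideal G H p) (Pideal G K 0)"
    using ideal_incl_Pideal_iff[OF assms(1,4), where s = 0 and K = H and r = p] p(1) by simp
  have "q dvd p \<longleftrightarrow> p = q" using primes_dvd_imp_eq[OF assms(6,5)] by auto
  with ideal_incl_Pideal_iff[OF assms(1,3) q, where r = p]
  show "ideal_incl G (Pideal G K p) (Pideal G H q) \<longleftrightarrow> p = q \<and> subconj G H K"
    by (simp only:)
qed

end
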